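(* For $n\geq 2$ let $k_n$ be the number of ordered pairs of words $(w,z)$ over the alphabet $\{A,B,C,D\}$ satisfying: (i) both $w$ and $z$ start with the letter $A$, and $|w|+|z|=n$; (ii) $w$ and $z$ contain the same number of letters $A$; (iii) neither $w$ nor $z$ contains a $CB$-factor (a letter $C$ immediately followed by a letter $B$); (iv) for all $i$, if the $i$th letter $A$ from the right in $w$ is immediately preceded by a $C$ and immediately followed by a $B$, then the $i$th segment of $z$ from the left contains a letter $B$; (v) for all $i$, if the $i$th letter $A$ from the right in $w$ is immediately preceded by a $C$ and immediately followed by two consecutive letters $B$, then the $i$th segment of $z$ from the left contains at least two letters $B$. Then there exists a constant $c$ such that $k_n\leq c\cdot 3.70672^n$ for all $n\geq 2$.
   Context: A segment of a word $v$ over $\{A,B,C,D\}$ is a factor (consecutive letters) that starts with a letter $A$ and ends immediately before the next letter $A$, or at the end of $v$. The $i$th segment from the left is the one starting at the $i$th letter $A$ from the left. The words $w$ and $z$ need not have the same length. *)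

theory Defs
  imports Complex_Main
begin

datatype letter = A | B | C | D

type_synonym word = "letter list"

definition apos :: "word \<Rightarrow> nat list" where
  "apos v = filter (\<lambda>p. v ! p = A) [0..<length v]"

text \<open>The j-th segment from the left (0-indexed, so j = i - 1): the factor starting
  at the (j+1)-st letter A from the left and ending just before the next A or at the end.\<close>
definition segment :: "word \<Rightarrow> nat \<Rightarrow> word" where
  "segment v j =
     (let s = apos v ! j;
          e = (if Suc j < length (apos v) then apos v ! Suc j else length v)
      in take (e - s) (drop s v))"

definition countA :: "word \<Rightarrow> nat" where
  "countA v = length (filter (\<lambda>x. x = A) v)"

definition countB :: "word \<Rightarrow> nat" where
  "countB v = length (filter (\<lambda>x. x = B) v)"

definition no_CB :: "word \<Rightarrow> bool" where
  "no_CB v \<longleftrightarrow> \<not> (\<exists>p. Suc p < length v \<and> v ! p = C \<and> v ! Suc p = B)"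

definition apos_right :: "word \<Rightarrow> nat \<Rightarrow> nat" where
  "apos_right v j = rev (apos v) ! j"

definition valid_pair :: "nat \<Rightarrow> word \<Rightarrow> word \<Rightarrow> bool" where
  "valid_pair n w z \<longleftrightarrow>
     w \<noteq> [] \<and> z \<noteq> [] \<and> hd w = A \<and> hd z = A \<and> length w + length z = n \<and>
     countA w = countA z \<and>
     no_CB w \<and> no_CB z \<and>
     (\<forall>j < countA w. let p = apos_right w j in
        (0 < p \<and> w ! (p - 1) = C \<and> Suc p < length w \<and> w ! Suc p = B
           \<longrightarrow> countB (segment z j) \<ge> 1)) \<and>
     (\<forall>j < countA w. let p = apos_right w j in
        (0 < p \<and> w ! (p - 1) = C \<and> Suc (Suc p) < length w \<and> w ! Suc p = B
           \<and> w ! Suc (Suc p) = B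
           \<longrightarrow> countB (segment z j) \<ge> 2))"

definition k_num :: "nat \<Rightarrow> nat" where
  "k_num n = card {(w, z). valid_pair n w z}"

end

theory Submission
  imports Defs
begin

text \<open>Write w = A u_1 ... A u_m and z = A v_1 ... A v_m with no A in the u_k and v_k.
  Conditions (iv) and (v) couple u_k only with v_(m+1-k), and only through the last letter of
  u_(k-1) and the first two letters of u_k. Hence the pair is determined by the word
  A u_1 A v_m A u_2 A v_(m-1) ... A u_m A v_1 of length n, and these words are accepted by a
  finite automaton that remembers whether the last letter was C and how many letters B (at
  most two) the coming segment of z still owes. A positive weight on its states, such that
  the successors of a state have total weight at most 3.70672 times its own, bounds the number
  of accepted words of length n by a constant times 3.70672^n.\<close>

section \<open>Counting the words accepted by a partial automaton\<close>

fun run :: "('s \<Rightarrow> 'a \<Rightarrow> 's option) \<Rightarrow> 's \<Rightarrow> 'a list \<Rightarrow> 's option" where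
  "run \<delta> q [] = Some q"
| "run \<delta> q (x # xs) = (case \<delta> q x of None \<Rightarrow> None | Some q' \<Rightarrow> run \<delta> q' xs)"

lemma run_append:
  "run \<delta> q (xs @ ys) = (case run \<delta> q xs of None \<Rightarrow> None | Some q' \<Rightarrow> run \<delta> q' ys)"
  by (induction xs arbitrary: q) (auto split: option.split)

definition accepted :: "('s \<Rightarrow> 'a \<Rightarrow> 's option) \<Rightarrow> 's \<Rightarrow> nat \<Rightarrow> 'a list set" where
  "accepted \<delta> q n = {v. length v = n \<and> run \<delta> q v \<noteq> None}"

lemma finite_accepted: "finite (accepted \<delta> q n :: 'a::finite list set)"
proof -
  have "finite {xs :: 'a list. set xs \<subseteq> UNIV \<and> length xs = n}"
    by (rule finite_lists_length_eq) simp
  then show ?thesis by (rule rev_finite_subset) (auto simp: accepted_def)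
qed

lemma accepted_Suc:
  "accepted \<delta> q (Suc n) =
     (\<Union>x. Cons x ` (case \<delta> q x of None \<Rightarrow> {} | Some q' \<Rightarrow> accepted \<delta> q' n))"
proof (intro set_eqI iffI)
  fix v assume "v \<in> accepted \<delta> q (Suc n)"
  then obtain x u q' where "v = x # u" "length u = n" "\<delta> q x = Some q'" "run \<delta> q' u \<noteq> None"
    by (auto simp: accepted_def length_Suc_conv split: option.splits)
  then have "v \<in> Cons x ` accepted \<delta> q' n" by (simp add: accepted_def)
  with \<open>\<delta> q x = Some q'\<close>
  show "v \<in> (\<Union>x. Cons x ` (case \<delta> q x of None \<Rightarrow> {} | Some q' \<Rightarrow> accepted \<delta> q' n))"
    by (intro UN_I[of x]) auto
qed (auto simp: accepted_def split: option.splits)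

lemma card_accepted_Suc:
  "card (accepted \<delta> q (Suc n) :: 'a::finite list set) =
     (\<Sum>x\<in>UNIV. case \<delta> q x of None \<Rightarrow> 0 | Some q' \<Rightarrow> card (accepted \<delta> q' n))"
  unfolding accepted_Suc
  by (subst card_UN_disjoint)
    (auto simp: card_image finite_accepted intro!: sum.cong split: option.split)

lemma card_accepted_le_potential:
  fixes \<delta> :: "'s \<Rightarrow> 'a::finite \<Rightarrow> 's option" and \<phi> :: "'s \<Rightarrow> real"
  assumes closed: "\<And>q x q'. I q \<Longrightarrow> \<delta> q x = Some q' \<Longrightarrow> I q'"
    and ge_1: "\<And>q. I q \<Longrightarrow> 1 \<le> \<phi> q"
    and super: "\<And>q. I q \<Longrightarrow> (\<Sum>x\<in>UNIV. case \<delta> q x of None \<Rightarrow> 0 | Some q' \<Rightarrow> \<phi> q') \<le> \<rho> * \<phi> q"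
    and "I q"
  shows "real (card (accepted \<delta> q n)) \<le> \<phi> q * \<rho> ^ n"
  using \<open>I q\<close>
proof (induction n arbitrary: q)
  case 0
  have "accepted \<delta> q 0 = {[]}" by (auto simp: accepted_def)
  then show ?case using ge_1[OF 0] by simp
next
  case (Suc n)
  let ?\<phi>' = "\<lambda>x. case \<delta> q x of None \<Rightarrow> 0 | Some q' \<Rightarrow> \<phi> q'"
  have nonneg: "0 \<le> ?\<phi>' x" for x
    using closed[OF Suc.prems] ge_1 by (fastforce split: option.split)
  have "0 \<le> \<rho> * \<phi> q"
    using super[OF Suc.prems] sum_nonneg[of UNIV ?\<phi>', OF nonneg] by linarith
  then have "0 \<le> \<rho>" using ge_1[OF Suc.prems] by (simp add: zero_le_mult_iff)
  have "real (card (accepted \<delta> q (Suc n))) =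
        (\<Sum>x\<in>UNIV. case \<delta> q x of None \<Rightarrow> 0 | Some q' \<Rightarrow> real (card (accepted \<delta> q' n)))"
    unfolding card_accepted_Suc of_nat_sum by (auto intro!: sum.cong split: option.split)
  also have "\<dots> \<le> (\<Sum>x\<in>UNIV. ?\<phi>' x * \<rho> ^ n)"
    using Suc.IH closed[OF Suc.prems] by (intro sum_mono) (auto split: option.split)
  also have "\<dots> \<le> \<rho> * \<phi> q * \<rho> ^ n"
    unfolding sum_distrib_right[symmetric]
    using super[OF Suc.prems] \<open>0 \<le> \<rho>\<close> by (intro mult_right_mono) auto
  finally show ?case by (simp add: mult.commute mult.left_commute)
qed

section \<open>Segments\<close>

definition join :: "word list \<Rightarrow> word" where
  "join us = concat (map (Cons A) us)"

lemma join_Nil [simp]: "join [] = []"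
  and join_Cons [simp]: "join (u # us) = A # u @ join us"
  and join_append [simp]: "join (us @ vs) = join us @ join vs"
  by (simp_all add: join_def)

lemma join_Nil_or_hd_A: "join us = [] \<or> hd (join us) = A"
  by (cases us) auto

lemma join_nth_split:
  "k < length us \<Longrightarrow> join us = join (take k us) @ A # us ! k @ join (drop (Suc k) us)"
  by (metis id_take_nth_drop join_Cons join_append)

lemma word_eq_prefix_join: "\<exists>u us. v = u @ join us \<and> A \<notin> set u \<and> (\<forall>x\<in>set us. A \<notin> set x)"
proof (induction v)
  case Nil
  show ?case by (intro exI[of _ "[]"]) simp
next
  case (Cons x v)
  then obtain u us where v: "v = u @ join us" "A \<notin> set u" "\<forall>x\<in>set us. A \<notin> set x" by blast
  show ?case
  proof (cases "x = A")
    case True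
    with v show ?thesis by (intro exI[of _ "[]"] exI[of _ "u # us"]) auto
  next
    case False
    with v show ?thesis by (intro exI[of _ "x # u"] exI[of _ us]) auto
  qed
qed

lemma hd_A_eq_join:
  assumes "w \<noteq> []" "hd w = A"
  shows "\<exists>us. w = join us \<and> (\<forall>x\<in>set us. A \<notin> set x)"
proof -
  obtain u us where w: "w = u @ join us" "A \<notin> set u" "\<forall>x\<in>set us. A \<notin> set x"
    using word_eq_prefix_join by blast
  have "u = []"
    using assms w by (metis hd_append2 list.set_sel(1))
  with w show ?thesis by auto
qed

definition segs :: "word \<Rightarrow> word list" where
  "segs w = (SOME us. w = join us \<and> (\<forall>x\<in>set us. A \<notin> set x))"

lemma join_segs:
  assumes "w \<noteq> []" "hd w = A"
  shows "join (segs w) = w" and "\<forall>x\<in>set (segs w). A \<notin> set x"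
  using someI_ex[OF hd_A_eq_join[OF assms]] by (simp_all add: segs_def)

lemma countA_join: "\<forall>x\<in>set us. A \<notin> set x \<Longrightarrow> countA (join us) = length us"
  by (induction us) (auto simp: countA_def filter_empty_conv)

lemma apos_append: "apos (xs @ ys) = apos xs @ map (\<lambda>p. p + length xs) (apos ys)"
proof -
  have "[0..<length (xs @ ys)] = [0..<length xs] @ map (\<lambda>p. p + length xs) [0..<length ys]"
    by (simp add: map_add_upt upt_add_eq_append[of 0] add.commute)
  moreover have "filter (\<lambda>p. (xs @ ys) ! p = A) [0..<length xs] = apos xs"
    unfolding apos_def by (rule filter_cong) (auto simp: nth_append)
  ultimately show ?thesis
    by (simp add: apos_def filter_map o_def nth_append)
qed

lemma apos_A_free: "A \<notin> set u \<Longrightarrow> apos u = []"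
  by (auto simp: apos_def filter_empty_conv) (metis nth_mem)

lemma apos_A_Cons_join:
  assumes "A \<notin> set u"
  shows "apos (A # u @ join us) = 0 # map (\<lambda>p. p + Suc (length u)) (apos (join us))"
proof -
  have "apos [A] = [0]" by (simp add: apos_def)
  then show ?thesis
    using apos_append[of "[A] @ u" "join us"] apos_append[of "[A]" u] by (simp add: assms apos_A_free o_def)
qed

lemma length_apos_join: "\<forall>x\<in>set us. A \<notin> set x \<Longrightarrow> length (apos (join us)) = length us"
  by (induction us) (simp_all add: apos_A_Cons_join apos_A_free)

lemma nth_apos_join:
  "\<forall>x\<in>set us. A \<notin> set x \<Longrightarrow> k < length us \<Longrightarrow> apos (join us) ! k = length (join (take k us))"
proof (induction us arbitrary: k)
  case (Cons u us)
  then show ?case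
    by (cases k) (auto simp: apos_A_Cons_join length_apos_join)
qed simp

lemma apos_right_join:
  assumes "\<forall>x\<in>set us. A \<notin> set x" "k < length us"
  shows "apos_right (join us) (length us - Suc k) = length (join (take k us))"
  using assms by (simp add: apos_right_def rev_nth length_apos_join nth_apos_join)

lemma segment_join:
  assumes A_free: "\<forall>x\<in>set us. A \<notin> set x" and k: "k < length us"
  shows "segment (join us) k = A # us ! k"
proof -
  let ?s = "length (join (take k us))"
  have end_pos: "(if Suc k < length (apos (join us)) then apos (join us) ! Suc k else length (join us))
      = ?s + Suc (length (us ! k))"
  proof (cases "Suc k < length us")
    case True
    then show ?thesis
      using A_free by (simp add: length_apos_join nth_apos_join take_Suc_conv_app_nth[OF k])
  next
    case False
    then have "length (join us) = ?s + Suc (length (us ! k))"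
      using join_nth_split[OF k] by simp
    with False show ?thesis
      using A_free by (simp add: length_apos_join)
  qed
  show ?thesis
    unfolding segment_def Let_def end_pos using A_free k
    by (subst (2) join_nth_split[OF k]) (simp add: nth_apos_join)
qed

lemma length_join_rev: "length (join (rev us)) = length (join us)"
  by (induction us) auto

fun interleave :: "word list \<Rightarrow> word list \<Rightarrow> word" where
  "interleave (u # us) (v # vs) = A # u @ A # v @ interleave us vs"
| "interleave _ _ = []"

lemma interleave_Nil_or_hd_A: "interleave us vs = [] \<or> hd (interleave us vs) = A"
  by (cases "(us, vs)" rule: interleave.cases) auto

lemma length_interleave:
  "length us = length vs \<Longrightarrow> length (interleave us vs) = length (join us) + length (join vs)"
  by (induction us vs rule: interleave.induct) auto

lemma append_A_free_inj:
  "A \<notin> set u \<Longrightarrow> A \<notin> set u' \<Longrightarrow> r = [] \<or> hd r = A \<Longrightarrow> r' = [] \<or> hd r' = A \<Longrightarrow>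
   u @ r = u' @ r' \<Longrightarrow> u = u' \<and> r = r'"
proof (induction u arbitrary: u')
  case Nil then show ?case by (cases u') auto
next
  case (Cons x u) then show ?case by (cases u') auto
qed

lemma interleave_inj:
  "length us = length vs \<Longrightarrow> length us' = length vs' \<Longrightarrow>
   \<forall>x\<in>set us. A \<notin> set x \<Longrightarrow> \<forall>x\<in>set vs. A \<notin> set x \<Longrightarrow>
   \<forall>x\<in>set us'. A \<notin> set x \<Longrightarrow> \<forall>x\<in>set vs'. A \<notin> set x \<Longrightarrow>
   interleave us vs = interleave us' vs' \<Longrightarrow> us = us' \<and> vs = vs'"
proof (induction us arbitrary: vs us' vs')
  case Nil
  then show ?case by (cases us'; cases vs') auto
next
  case (Cons u us)
  obtain v vs0 where vs: "vs = v # vs0"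
    using Cons.prems(1) by (cases vs) auto
  obtain u' us0 v' vs0' where us': "us' = u' # us0" and vs': "vs' = v' # vs0'"
    using Cons.prems(2,7) vs by (cases us'; cases vs') auto
  have "u @ (A # v @ interleave us vs0) = u' @ (A # v' @ interleave us0 vs0')"
    using Cons.prems(7) vs us' vs' by simp
  from append_A_free_inj[OF _ _ _ _ this]
  have u: "u = u'" and rest: "v @ interleave us vs0 = v' @ interleave us0 vs0'"
    using Cons.prems(3,5) us' by auto
  from append_A_free_inj[OF _ _ interleave_Nil_or_hd_A interleave_Nil_or_hd_A rest]
  have "v = v'" and "interleave us vs0 = interleave us0 vs0'"
    using Cons.prems(4,6) vs vs' by auto
  with Cons.IH[of vs0 us0 vs0'] Cons.prems vs us' vs' u show ?case
    by auto
qed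

fun no_CB_after :: "bool \<Rightarrow> word \<Rightarrow> bool" where
  "no_CB_after c [] = True"
| "no_CB_after c (x # u) = (\<not> (c \<and> x = B) \<and> no_CB_after (x = C) u)"

lemma no_CB_after_append:
  "no_CB_after c (xs @ ys) = (no_CB_after c xs \<and> no_CB_after (if xs = [] then c else last xs = C) ys)"
  by (induction xs arbitrary: c) auto

lemma no_CB_Cons: "no_CB (x # v) = (\<not> (x = C \<and> take 1 v = [B]) \<and> no_CB v)"
proof -
  let ?CB = "\<lambda>p. Suc p < length (x # v) \<and> (x # v) ! p = C \<and> (x # v) ! Suc p = B"
  have "(\<exists>p. ?CB p) = (?CB 0 \<or> (\<exists>p. ?CB (Suc p)))"
    by (metis not0_implies_Suc)
  then show ?thesis
    by (cases v) (auto simp: no_CB_def)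
qed

lemma no_CB_after_iff: "no_CB_after c v = (\<not> (c \<and> take 1 v = [B]) \<and> no_CB v)"
  by (induction v arbitrary: c) (auto simp: no_CB_Cons, simp add: no_CB_def)

lemma no_CB_eq_no_CB_after: "no_CB v = no_CB_after False v"
  by (simp add: no_CB_after_iff)

lemma no_CB_after_join: "no_CB_after c (join us) \<Longrightarrow> \<forall>u\<in>set us. no_CB_after False u"
  by (induction us arbitrary: c) (auto simp: no_CB_after_append)

definition ends_with_C :: "word \<Rightarrow> bool" where
  "ends_with_C u \<longleftrightarrow> u \<noteq> [] \<and> last u = C"

definition B_demand :: "bool \<Rightarrow> word \<Rightarrow> nat" where
  "B_demand p u = (if p \<and> take 1 u = [B] then if take 2 u = [B, B] then 2 else 1 else 0)"

definition preceded_by_C :: "bool \<Rightarrow> word list \<Rightarrow> nat \<Rightarrow> bool" where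
  "preceded_by_C p us k = (if k = 0 then p else ends_with_C (us ! (k - 1)))"

lemma C_before_A:
  "w = pre @ A # r \<Longrightarrow> (0 < length pre \<and> w ! (length pre - 1) = C) = ends_with_C pre"
  by (cases pre rule: rev_cases) (auto simp: ends_with_C_def nth_append)

lemma ends_with_C_join_take:
  assumes "k < length us"
  shows "ends_with_C (join (take k us)) = preceded_by_C False us k"
proof (cases k)
  case (Suc i)
  then have "join (take k us) = join (take i us) @ A # us ! i"
    using assms by (simp add: take_Suc_conv_app_nth)
  with Suc show ?thesis by (simp add: preceded_by_C_def ends_with_C_def)
qed (simp add: preceded_by_C_def ends_with_C_def)

lemma B_after_A:
  assumes "A \<notin> set u" "post = [] \<or> hd post = A" and "w = pre @ A # u @ post"
  shows "(Suc (length pre) < length w \<and> w ! Suc (length pre) = B) = (take 1 u = [B])"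
  using assms by (cases u; cases post) (auto simp: nth_append)

lemma BB_after_A:
  assumes "A \<notin> set u" "post = [] \<or> hd post = A" and "w = pre @ A # u @ post"
  shows "(Suc (Suc (length pre)) < length w \<and> w ! Suc (length pre) = B \<and> w ! Suc (Suc (length pre)) = B)
    = (take 2 u = [B, B])"
proof (cases u)
  case (Cons x u')
  with assms show ?thesis by (cases u'; cases post) (auto simp: nth_append)
qed (use assms in \<open>cases post; auto simp: nth_append\<close>)

lemma valid_pair_B_demand:
  assumes valid: "valid_pair n (join us) (join zs)"
    and us: "\<forall>x\<in>set us. A \<notin> set x" and zs: "\<forall>x\<in>set zs. A \<notin> set x"
    and len: "length zs = length us" and k: "k < length us"
  shows "B_demand (preceded_by_C False us k) (us ! k) \<le> countB (rev zs ! k)"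
proof -
  define j where "j = length us - Suc k"
  define pre where "pre = join (take k us)"
  let ?w = "join us" and ?p = "length pre"
  have split: "?w = pre @ A # us ! k @ join (drop (Suc k) us)"
    unfolding pre_def using k by (rule join_nth_split)
  have "apos_right ?w j = ?p"
    unfolding j_def pre_def using us k by (rule apos_right_join)
  moreover have "j < countA ?w"
    using countA_join[OF us] k by (simp add: j_def)
  ultimately have
    iv: "0 < ?p \<and> ?w ! (?p - 1) = C \<and> Suc ?p < length ?w \<and> ?w ! Suc ?p = B
      \<longrightarrow> 1 \<le> countB (segment (join zs) j)" and
    v: "0 < ?p \<and> ?w ! (?p - 1) = C \<and> Suc (Suc ?p) < length ?w \<and> ?w ! Suc ?p = B
      \<and> ?w ! Suc (Suc ?p) = B \<longrightarrow> 2 \<le> countB (segment (join zs) j)"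
    using valid unfolding valid_pair_def Let_def by auto
  have "countB (segment (join zs) j) = countB (rev zs ! k)"
    using segment_join[OF zs, of j] k len by (simp add: j_def rev_nth countB_def)
  moreover have "(0 < ?p \<and> ?w ! (?p - 1) = C) = preceded_by_C False us k"
    using C_before_A[OF split] ends_with_C_join_take[OF k] by (simp add: pre_def)
  moreover have "A \<notin> set (us ! k)"
    using us k by simp
  note B_after_A[OF this join_Nil_or_hd_A split] BB_after_A[OF this join_Nil_or_hd_A split]
  ultimately show ?thesis
    using iv v by (auto simp: B_demand_def)
qed

section \<open>The automaton\<close>

lemma UNIV_letter: "(UNIV :: letter set) = {A, B, C, D}"
  using letter.exhaust by auto

instance letter :: finite
  by standard (simp add: UNIV_letter)

text \<open>In \<open>WHead p\<close> it has just read the A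
  opening some u_k, and p says that this A is preceded by C in w; \<open>WHeadB\<close> means that it is also
  followed by B. \<open>WBody r c\<close> is inside u_k, which demands r letters B from v_(m+1-k);
  \<open>ZBody e r c\<close> is inside v_(m+1-k), which still owes r letters B, and e records that u_k ends
  with C; the truncated subtraction r - 1 lets surplus letters B pass. The flag c means that the
  previous letter is C, so that B is forbidden.\<close>

datatype state = Start | WHead bool | WHeadB | WBody nat bool | ZBody bool nat bool

fun step :: "state \<Rightarrow> letter \<Rightarrow> state option" where
  "step Start x = (if x = A then Some (WHead False) else None)"
| "step (WHead p) x = (case x of
      A \<Rightarrow> Some (ZBody False 0 False)
    | B \<Rightarrow> Some (if p then WHeadB else WBody 0 False)
    | C \<Rightarrow> Some (WBody 0 True)
    | D \<Rightarrow> Some (WBody 0 False))"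
| "step WHeadB x = (case x of
      A \<Rightarrow> Some (ZBody False 1 False)
    | B \<Rightarrow> Some (WBody 2 False)
    | C \<Rightarrow> Some (WBody 1 True)
    | D \<Rightarrow> Some (WBody 1 False))"
| "step (WBody r c) x = (case x of
      A \<Rightarrow> Some (ZBody c r False)
    | B \<Rightarrow> (if c then None else Some (WBody r False))
    | C \<Rightarrow> Some (WBody r True)
    | D \<Rightarrow> Some (WBody r False))"
| "step (ZBody e r c) x = (case x of
      A \<Rightarrow> (if r = 0 then Some (WHead e) else None)
    | B \<Rightarrow> (if c then None else Some (ZBody e (r - 1) False))
    | C \<Rightarrow> Some (ZBody e r True)
    | D \<Rightarrow> Some (ZBody e r False))"

fun owes_at_most_2 :: "state \<Rightarrow> bool" where
  "owes_at_most_2 (WBody r c) = (r \<le> 2)"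
| "owes_at_most_2 (ZBody e r c) = (r \<le> 2)"
| "owes_at_most_2 _ = True"

lemma owes_at_most_2_step: "owes_at_most_2 q \<Longrightarrow> step q x = Some q' \<Longrightarrow> owes_at_most_2 q'"
  by (cases q; cases x) (auto split: if_splits)

text \<open>A numerically computed approximation of the Perron eigenvector of the transfer matrix of
  \<open>step\<close>, scaled to integers.\<close>

fun weight :: "state \<Rightarrow> real" where
  "weight Start = 263440407933"
| "weight (WHead p) = (if p then 808374395291 else 976499645522)"
| "weight WHeadB = 353306535014"
| "weight (WBody r c) =
    (if r = 0 then (if c then 666610795292 else 976499645522)
     else if r = 1 then (if c then 285209352298 else 417795261322)
     else (if c then 122026788664 else 178753654631))"
| "weight (ZBody e r c) = (if e then
      (if r = 0 then (if c then 604496763007 else 827828662303)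
       else if r = 1 then (if c then 130854498910 else 354186398206)
       else (if c then 55986082348 else 151538609843))
    else
      (if r = 0 then (if c then 730219658408 else 1000000000000)
       else if r = 1 then (if c then 158069543698 else 427849885290)
       else (if c then 67630036139 else 183055524342)))"

lemma weight_ge_1: "1 \<le> weight q"
  by (cases q) auto

lemma sum_weight_step_le:
  assumes "owes_at_most_2 q"
  shows "(\<Sum>x\<in>UNIV. case step q x of None \<Rightarrow> 0 | Some q' \<Rightarrow> weight q') \<le> 3.70672 * weight q"
proof (cases q)
  case (WBody r c)
  with assms have "r = 0 \<or> r = 1 \<or> r = 2" by auto
  with WBody show ?thesis by (cases c) (auto simp: UNIV_letter)
next
  case (ZBody e r c)
  with assms have "r = 0 \<or> r = 1 \<or> r = 2" by auto
  with ZBody show ?thesis by (cases c; cases e) (auto simp: UNIV_letter)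
qed (auto simp: UNIV_letter)

lemma card_accepted_Start: "real (card (accepted step Start n)) \<le> weight Start * 3.70672 ^ n"
  using owes_at_most_2_step weight_ge_1 sum_weight_step_le
  by (rule card_accepted_le_potential[where I = owes_at_most_2]) auto

lemma run_WBody:
  "A \<notin> set u \<Longrightarrow> no_CB_after c u \<Longrightarrow>
   run step (WBody r c) u = Some (WBody r (if u = [] then c else last u = C))"
proof (induction u arbitrary: c)
  case (Cons x u)
  then show ?case by (cases x) auto
qed simp

lemma run_ZBody:
  "A \<notin> set v \<Longrightarrow> no_CB_after c v \<Longrightarrow>
   run step (ZBody e r c) v = Some (ZBody e (r - countB v) (if v = [] then c else last v = C))"
proof (induction v arbitrary: c r)
  case (Cons x v)
  then show ?case by (cases x) (auto simp: countB_def)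
qed (simp add: countB_def)

lemma run_WHead:
  assumes "A \<notin> set u" "no_CB_after False u"
  shows "\<exists>q. run step (WHead p) u = Some q \<and> step q A = Some (ZBody (ends_with_C u) (B_demand p u) False)"
proof (cases u)
  case (Cons x u')
  with assms show ?thesis
    by (cases x; cases p; cases u'; cases "hd u'")
      (auto simp: run_WBody ends_with_C_def B_demand_def)
qed (simp add: ends_with_C_def B_demand_def)

lemma run_block:
  assumes "A \<notin> set u" "no_CB_after False u" "A \<notin> set v" "no_CB_after False v"
  shows "run step (WHead p) (u @ A # v) = Some (ZBody (ends_with_C u) (B_demand p u - countB v) (ends_with_C v))"
proof -
  obtain q where "run step (WHead p) u = Some q" "step q A = Some (ZBody (ends_with_C u) (B_demand p u) False)"
    using run_WHead[OF assms(1,2)] by blast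
  with assms(3,4) show ?thesis
    by (simp add: run_append run_ZBody ends_with_C_def)
qed

lemma run_interleave:
  "step q A = Some (WHead p) \<Longrightarrow> length vs = length us \<Longrightarrow>
   \<forall>u\<in>set us. A \<notin> set u \<and> no_CB_after False u \<Longrightarrow> \<forall>v\<in>set vs. A \<notin> set v \<and> no_CB_after False v \<Longrightarrow>
   \<forall>k<length us. B_demand (preceded_by_C p us k) (us ! k) \<le> countB (vs ! k) \<Longrightarrow>
   run step q (interleave us vs) \<noteq> None"
proof (induction us arbitrary: vs q p)
  case (Cons u us)
  obtain v vs' where vs: "vs = v # vs'"
    using Cons.prems(2) by (cases vs) auto
  let ?q = "ZBody (ends_with_C u) 0 (ends_with_C v)"
  have "B_demand p u \<le> countB v"
    using Cons.prems(5)[rule_format, of 0] vs by (simp add: preceded_by_C_def)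
  then have block: "run step (WHead p) (u @ A # v) = Some ?q"
    using run_block[of u v p] Cons.prems(3,4) vs by simp
  have "run step q (interleave (u # us) vs) = run step (WHead p) ((u @ A # v) @ interleave us vs')"
    using vs Cons.prems(1) by simp
  also have "\<dots> = run step ?q (interleave us vs')"
    unfolding run_append[of _ _ "u @ A # v"] block by simp
  finally have "run step q (interleave (u # us) vs) = run step ?q (interleave us vs')" .
  moreover have "run step ?q (interleave us vs') \<noteq> None"
  proof (rule Cons.IH)
    show "step ?q A = Some (WHead (ends_with_C u))" by simp
    show "length vs' = length us" using Cons.prems(2) vs by simp
    show "\<forall>u\<in>set us. A \<notin> set u \<and> no_CB_after False u" using Cons.prems(3) by simp
    show "\<forall>v\<in>set vs'. A \<notin> set v \<and> no_CB_after False v" using Cons.prems(4) vs by simp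
    show "\<forall>k<length us. B_demand (preceded_by_C (ends_with_C u) us k) (us ! k) \<le> countB (vs' ! k)"
    proof (intro allI impI)
      fix k assume "k < length us"
      moreover have "preceded_by_C p (u # us) (Suc k) = preceded_by_C (ends_with_C u) us k"
        by (cases k) (simp_all add: preceded_by_C_def)
      ultimately show "B_demand (preceded_by_C (ends_with_C u) us k) (us ! k) \<le> countB (vs' ! k)"
        using Cons.prems(5)[rule_format, of "Suc k"] vs by simp
    qed
  qed
  ultimately show ?case by simp
qed simp

section \<open>Encoding a pair by one word\<close>

text \<open>The k-th segment of w from the left is followed by the k-th segment of z from the right,
  its partner in conditions (iv) and (v).\<close>

definition encode :: "word \<times> word \<Rightarrow> word" where
  "encode wz = interleave (segs (fst wz)) (rev (segs (snd wz)))"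

lemma valid_pair_segs:
  assumes "valid_pair n w z"
  shows "join (segs w) = w" "\<forall>x\<in>set (segs w). A \<notin> set x"
    and "join (segs z) = z" "\<forall>x\<in>set (segs z). A \<notin> set x"
    and "length (segs z) = length (segs w)"
proof -
  have "w \<noteq> []" "hd w = A" "z \<noteq> []" "hd z = A" "countA w = countA z"
    using assms by (auto simp: valid_pair_def)
  then show "join (segs w) = w" "\<forall>x\<in>set (segs w). A \<notin> set x"
    and "join (segs z) = z" "\<forall>x\<in>set (segs z). A \<notin> set x"
    and "length (segs z) = length (segs w)"
    using join_segs countA_join by metis+
qed

lemma length_encode: "valid_pair n w z \<Longrightarrow> length (encode (w, z)) = n"
  using valid_pair_segs[of n w z]
  by (simp add: encode_def length_interleave length_join_rev valid_pair_def)

lemma inj_on_encode: "inj_on encode {(w, z). valid_pair n w z}"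
proof (rule inj_onI, clarsimp)
  fix w z w' z'
  assume "valid_pair n w z" "valid_pair n w' z'" "encode (w, z) = encode (w', z')"
  with valid_pair_segs[of n w z] valid_pair_segs[of n w' z']
  have "segs w = segs w' \<and> rev (segs z) = rev (segs z')"
    by (intro interleave_inj) (auto simp: encode_def)
  then show "w = w' \<and> z = z'"
    using valid_pair_segs(1,3)[OF \<open>valid_pair n w z\<close>] valid_pair_segs(1,3)[OF \<open>valid_pair n w' z'\<close>]
    by (metis rev_rev_ident)
qed

lemma encode_accepted:
  assumes "valid_pair n w z"
  shows "encode (w, z) \<in> accepted step Start n"
proof -
  let ?us = "segs w" and ?zs = "segs z"
  note segs = valid_pair_segs[OF assms]
  have "no_CB_after False (join ?us)" "no_CB_after False (join ?zs)"
    using assms segs(1,3) by (simp_all add: valid_pair_def no_CB_eq_no_CB_after)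
  then have "\<forall>u\<in>set ?us. no_CB_after False u" "\<forall>v\<in>set ?zs. no_CB_after False v"
    by (simp_all add: no_CB_after_join)
  moreover have "valid_pair n (join ?us) (join ?zs)"
    using assms segs(1,3) by simp
  note valid_pair_B_demand[OF this segs(2,4,5)]
  ultimately have "run step Start (interleave ?us (rev ?zs)) \<noteq> None"
    using segs(2,4,5) by (intro run_interleave[where p = False]) auto
  then show ?thesis
    using length_encode[OF assms] by (simp add: accepted_def encode_def)
qed

theorem corollary4p3:
  shows "\<exists>c::real. \<forall>n::nat. n \<ge> 2 \<longrightarrow> real (k_num n) \<le> c * 3.70672 ^ n"
proof (intro exI allI impI)
  fix n :: nat
  have "k_num n \<le> card (accepted step Start n)"
    unfolding k_num_def using inj_on_encode encode_accepted finite_accepted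
    by (intro card_inj_on_le) auto
  then show "real (k_num n) \<le> weight Start * 3.70672 ^ n"
    using card_accepted_Start by (meson of_nat_le_iff order_trans)
qed

end
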